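(* Let $g\ge2$ and let $q_i(x,y)=a_ix^2+2b_ixy+c_iy^2$ ($i=1,\ldots,g$) be integer binary quadratic forms, irreducible over the integers, with $a_i\equiv1\pmod4$ and $D:=\prod_{p\le2g}p\prod_ka_kc_k\delta_k\prod_{i<j}\operatorname{Res}(q_i,q_j)\neq0$. For a prime $p\nmid D$ define $$\omega(p):=p\sum_{\substack{c_1\mid p,\ldots,c_g\mid p\\ p\mid c_1\cdots c_g}}\mu(p)\mu(c_1)\cdots\mu(c_g)\frac{\rho(c_1,\ldots,c_g)}{(c_1\cdots c_g)^2}.$$ Then for every prime $p\nmid D$, $$\omega(p)=p^{-1}\bigl(\rho(p,1,\ldots,1)+\rho(1,p,1,\ldots,1)+\cdots+\rho(1,\ldots,1,p)+1-g\bigr).$$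
   Context: $\delta_k$ is the discriminant of $q_k$, $\operatorname{Res}$ the resultant, $\mu$ the Möbius function. For positive integers $c_1,\ldots,c_g$: $\Lambda_{\mathbf c}:=\{\mathbf x\in\mathbb Z^2:c_i\mid q_i(\mathbf x)\ \forall i\}$ and $\rho(\mathbf c):=\#(\Lambda_{\mathbf c}\cap[0,c_1\cdots c_g)^2)$. *)

theory Defs
  imports "HOL-Computational_Algebra.Computational_Algebra"
begin

definition qform :: "int \<Rightarrow> int \<Rightarrow> int \<Rightarrow> int \<Rightarrow> int \<Rightarrow> int" where
  "qform a b c x y = a * x^2 + 2 * b * x * y + c * y^2"

definition qdisc :: "int \<Rightarrow> int \<Rightarrow> int \<Rightarrow> int" where
  "qdisc a b c = (2*b)^2 - 4*a*c"

text \<open>Resultant of the binary forms a x^2 + B x y + c y^2 and a' x^2 + B' x y + c' y^2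
  (B = 2b, B' = 2b'): the Sylvester determinant (ac'-a'c)^2 - (aB'-a'B)(Bc'-B'c).\<close>
definition qres :: "int \<Rightarrow> int \<Rightarrow> int \<Rightarrow> int \<Rightarrow> int \<Rightarrow> int \<Rightarrow> int" where
  "qres a b c a' b' c' =
     (a*c' - a'*c)^2 - (a*(2*b') - a'*(2*b)) * ((2*b)*c' - (2*b')*c)"

definition moebius :: "nat \<Rightarrow> int" where
  "moebius n = (if squarefree n then (-1) ^ card (prime_factors n) else 0)"

definition rho :: "nat \<Rightarrow> (nat \<Rightarrow> int) \<Rightarrow> (nat \<Rightarrow> int) \<Rightarrow> (nat \<Rightarrow> int) \<Rightarrow> (nat \<Rightarrow> nat) \<Rightarrow> nat" where
  "rho g a b c d = card {(x::int, y::int).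
      0 \<le> x \<and> x < int (\<Prod>i<g. d i) \<and> 0 \<le> y \<and> y < int (\<Prod>i<g. d i) \<and>
      (\<forall>i<g. int (d i) dvd qform (a i) (b i) (c i) x y)}"

definition bigD :: "nat \<Rightarrow> (nat \<Rightarrow> int) \<Rightarrow> (nat \<Rightarrow> int) \<Rightarrow> (nat \<Rightarrow> int) \<Rightarrow> int" where
  "bigD g a b c =
     (\<Prod>p\<in>{p. prime p \<and> p \<le> 2*g}. int p) *
     (\<Prod>k<g. a k * c k * qdisc (a k) (b k) (c k)) *
     (\<Prod>(i, j)\<in>{(i, j). i < j \<and> j < g}. qres (a i) (b i) (c i) (a j) (b j) (c j))"

definition omega :: "nat \<Rightarrow> (nat \<Rightarrow> int) \<Rightarrow> (nat \<Rightarrow> int) \<Rightarrow> (nat \<Rightarrow> int) \<Rightarrow> nat \<Rightarrow> real" where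
  "omega g a b c p = real p *
     (\<Sum>d\<in>{d \<in> {..<g} \<rightarrow>\<^sub>E {k. k dvd p}. p dvd (\<Prod>i<g. d i)}.
        of_int (moebius p * (\<Prod>i<g. moebius (d i))) * real (rho g a b c d)
        / (real (\<Prod>i<g. d i))^2)"

end

(* Since p is prime, the vectors d contributing to omega(p) have entries in {1, p}; they
   correspond to the nonempty sets S of indices with d_i = p, and d contributes
   (-1)^(|S|+1) rho_S / p^(2|S|). Both Res(q_i, q_j) x^3 and Res(q_i, q_j) y^3 are combinations
   of q_i and q_j, so if p does not divide Res(q_i, q_j), then p | q_i(x,y) and p | q_j(x,y)
   force p | x and p | y. Hence for |S| >= 2 the count rho_S is (p^(|S|-1))^2, the term is
   (-1)^(|S|+1) / p^2, and the alternating sum of these terms over the non-singleton sets S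
   is 1 - g. *)

theory Submission
  imports Defs
begin

lemma qres_mult_cube_fst:
  "qres a b c a' b' c' * x^3 =
     ((a*c'^2 - 4*b*b'*c' + 4*c*b'^2 - c*a'*c') * x + (2*c*b'*c' - 2*b*c'^2) * y)
       * qform a b c x y
   + ((4*b^2*c' - 4*b*c*b' - a*c*c' + c^2*a') * x + (2*b*c*c' - 2*c^2*b') * y)
       * qform a' b' c' x y"
  unfolding qres_def qform_def by (simp add: power2_eq_square power3_eq_cube algebra_simps)

lemma qres_mult_cube_snd:
  "qres a b c a' b' c' * y^3 =
     ((2*a*a'*b' - 2*b*a'^2) * x + (4*a*b'^2 - a*a'*c' - 4*b*a'*b' + c*a'^2) * y)
       * qform a b c x y
   + ((2*a*b*a' - 2*a^2*b') * x + (a^2*c' - 4*a*b*b' + 4*b^2*a' - a*c*a') * y)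
       * qform a' b' c' x y"
  unfolding qres_def qform_def by (simp add: power2_eq_square power3_eq_cube algebra_simps)

lemma prime_dvd_qforms_iff:
  fixes p :: int
  assumes "prime p" and "\<not> p dvd qres a b c a' b' c'"
  shows "p dvd qform a b c x y \<and> p dvd qform a' b' c' x y \<longleftrightarrow> p dvd x \<and> p dvd y"
proof
  assume dvd_forms: "p dvd qform a b c x y \<and> p dvd qform a' b' c' x y"
  have "p dvd qres a b c a' b' c' * x^3"
    unfolding qres_mult_cube_fst[where y = y] using dvd_forms by simp
  moreover have "p dvd qres a b c a' b' c' * y^3"
    unfolding qres_mult_cube_snd[where x = x] using dvd_forms by simp
  ultimately show "p dvd x \<and> p dvd y"
    using assms by (meson prime_dvd_mult_iff prime_dvd_power)
next
  assume "p dvd x \<and> p dvd y"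
  then show "p dvd qform a b c x y \<and> p dvd qform a' b' c' x y"
    unfolding qform_def by (simp add: power2_eq_square)
qed

lemma qres_dvd_bigD:
  assumes "i < j" and "j < g"
  shows "qres (a i) (b i) (c i) (a j) (b j) (c j) dvd bigD g a b c"
proof -
  let ?res = "\<lambda>(i, j). qres (a i) (b i) (c i) (a j) (b j) (c j)"
  have "finite {(i, j). i < j \<and> j < g}"
    by (rule finite_subset[of _ "{..<g} \<times> {..<g}"]) auto
  then have "?res (i, j) dvd prod ?res {(i, j). i < j \<and> j < g}"
    using assms by (intro dvd_prodI) auto
  then show ?thesis
    unfolding bigD_def by (simp add: dvd_mult)
qed

lemma card_multiples_below:
  fixes m n :: int
  assumes "m > 0"
  shows "card {x. 0 \<le> x \<and> x < m * n \<and> m dvd x} = nat n"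
proof -
  have "{x. 0 \<le> x \<and> x < m * n \<and> m dvd x} = (\<lambda>t. m * t) ` {0..<n}"
    using assms by (auto simp: zero_le_mult_iff elim!: dvdE)
  moreover have "inj_on (\<lambda>t. m * t) {0..<n}"
    using assms by (auto simp: inj_on_def)
  ultimately show ?thesis
    by (simp add: card_image)
qed

lemma prod_indicator_power:
  fixes u :: "'a::comm_monoid_mult" and g :: nat
  assumes "S \<subseteq> {..<g}"
  shows "(\<Prod>i<g. if i \<in> S then u else 1) = u ^ card S"
  using assms by (simp add: prod.If_cases Int_absorb1)

lemma rho_cong:
  assumes "\<And>i. i < g \<Longrightarrow> d i = d' i"
  shows "rho g a b c d = rho g a b c d'"
proof -
  have "(\<Prod>i<g. d i) = (\<Prod>i<g. d' i)"
    using assms by simp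
  then show ?thesis
    unfolding rho_def using assms by simp
qed

lemma rho_indicator_of_card_ge_2:
  assumes "prime p" and "S \<subseteq> {..<g}" and "card S \<ge> 2"
    and coprime_res: "\<And>i j. i \<in> S \<Longrightarrow> j \<in> S \<Longrightarrow> i < j \<Longrightarrow>
      \<not> int p dvd qres (a i) (b i) (c i) (a j) (b j) (c j)"
  shows "rho g a b c (\<lambda>i. if i \<in> S then p else 1) = p ^ (2 * (card S - 1))"
proof -
  let ?k = "card S"
  let ?M = "{x::int. 0 \<le> x \<and> x < int p * int (p ^ (?k - 1)) \<and> int p dvd x}"
  obtain i j where ij: "i \<in> S" "j \<in> S" "i < j"
    using \<open>card S \<ge> 2\<close> unfolding numeral_2_eq_2 card_le_Suc_iff
    by (metis insertCI linorder_neqE_nat)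
  have prod_eq: "(\<Prod>i<g. if i \<in> S then p else 1) = p * p ^ (?k - 1)"
    using prod_indicator_power[OF assms(2)] \<open>card S \<ge> 2\<close> by (simp flip: power_Suc)
  have dvd_forms_iff:
    "(\<forall>l<g. int (if l \<in> S then p else 1) dvd qform (a l) (b l) (c l) x y)
      \<longleftrightarrow> int p dvd x \<and> int p dvd y" for x y
  proof
    assume "\<forall>l<g. int (if l \<in> S then p else 1) dvd qform (a l) (b l) (c l) x y"
    then have "int p dvd qform (a i) (b i) (c i) x y \<and> int p dvd qform (a j) (b j) (c j) x y"
      using ij assms(2) by auto
    then show "int p dvd x \<and> int p dvd y"
      using prime_dvd_qforms_iff coprime_res[OF ij] \<open>prime p\<close> by auto
  next
    assume "int p dvd x \<and> int p dvd y"
    then show "\<forall>l<g. int (if l \<in> S then p else 1) dvd qform (a l) (b l) (c l) x y"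
      by (simp add: qform_def power2_eq_square)
  qed
  have "rho g a b c (\<lambda>i. if i \<in> S then p else 1) = card (?M \<times> ?M)"
    unfolding rho_def prod_eq dvd_forms_iff by (rule arg_cong[where f = card]) auto
  also have "\<dots> = card ?M * card ?M"
    by (rule card_cartesian_product)
  also have "card ?M = p ^ (?k - 1)"
    using card_multiples_below[of "int p"] prime_gt_0_nat[OF \<open>prime p\<close>]
    by (simp flip: of_nat_power)
  finally show ?thesis
    by (simp add: mult_2 flip: power_add)
qed

lemma rho_indicator_density:
  assumes "prime p" and "S \<subseteq> {..<g}" and "card S \<ge> 2"
    and "\<And>i j. i \<in> S \<Longrightarrow> j \<in> S \<Longrightarrow> i < j \<Longrightarrow>
      \<not> int p dvd qres (a i) (b i) (c i) (a j) (b j) (c j)"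
  shows "real (rho g a b c (\<lambda>i. if i \<in> S then p else 1)) / real p ^ (2 * card S)
    = 1 / real p ^ 2"
proof -
  have "2 * card S = 2 * (card S - 1) + 2"
    using \<open>card S \<ge> 2\<close> by simp
  then have "real p ^ (2 * card S) = real p ^ (2 * (card S - 1)) * real p ^ 2"
    by (metis power_add)
  then show ?thesis
    using rho_indicator_of_card_ge_2[OF assms] prime_gt_0_nat[OF \<open>prime p\<close>] by simp
qed

(* Written so that summing over S splits into the alternating sum of the signs and a sum
   over the singletons. *)
lemma omega_summand_eq:
  assumes "prime p" and "S \<subseteq> {..<g}" and "S \<noteq> {}"
    and "\<And>i j. i \<in> S \<Longrightarrow> j \<in> S \<Longrightarrow> i < j \<Longrightarrow>
      \<not> int p dvd qres (a i) (b i) (c i) (a j) (b j) (c j)"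
  shows "(-1) ^ (card S + 1) * real (rho g a b c (\<lambda>i. if i \<in> S then p else 1))
      / real p ^ (2 * card S)
    = ((-1) ^ (card S + 1)
        + (if card S = 1 then real (rho g a b c (\<lambda>i. if i \<in> S then p else 1)) - 1 else 0))
      / real p ^ 2"
proof (cases "card S = 1")
  case False
  have "card S \<noteq> 0"
    using assms(2,3) finite_subset by fastforce
  with False have "real (rho g a b c (\<lambda>i. if i \<in> S then p else 1)) / real p ^ (2 * card S)
      = 1 / real p ^ 2"
    using assms by (intro rho_indicator_density) auto
  then show ?thesis
    using False by (simp add: times_divide_eq_right[symmetric])
qed simp

lemma moebius_1: "moebius 1 = 1"
  by (simp add: moebius_def)

lemma moebius_prime: "prime p \<Longrightarrow> moebius p = -1"
  by (simp add: moebius_def squarefree_prime prime_prime_factors)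

lemma dvd_prime_nat_iff:
  fixes p :: nat
  assumes "prime p"
  shows "k dvd p \<longleftrightarrow> k = 1 \<or> k = p"
  using assms by (metis gcd_nat.eq_iff one_dvd prime_nat_iff)

lemma bij_betw_nonempty_subsets_prime_divisor_vectors:
  fixes g p :: nat
  assumes "prime p"
  shows "bij_betw (\<lambda>S. restrict (\<lambda>i. if i \<in> S then p else 1) {..<g}) (Pow {..<g} - {{}})
           {d \<in> {..<g} \<rightarrow>\<^sub>E {k. k dvd p}. p dvd (\<Prod>i<g. d i)}"
proof -
  let ?vec = "\<lambda>S. restrict (\<lambda>i. if i \<in> S then p else 1) {..<g}"
  let ?supp = "\<lambda>d. {i \<in> {..<g}. d i = p}"
  let ?D = "{d \<in> {..<g} \<rightarrow>\<^sub>E {k. k dvd p}. p dvd (\<Prod>i<g. d i)}"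
  have "p \<noteq> 1"
    using assms by auto
  have "\<forall>S \<in> Pow {..<g} - {{}}. ?supp (?vec S) = S"
    using \<open>p \<noteq> 1\<close> by auto
  moreover have "\<forall>d \<in> ?D. ?vec (?supp d) = d"
  proof
    fix d assume d: "d \<in> ?D"
    then have "?vec (?supp d) = restrict d {..<g}"
      using dvd_prime_nat_iff[OF assms] by (intro restrict_ext) (force simp: PiE_iff)
    also have "\<dots> = d"
      using d PiE_restrict by blast
    finally show "?vec (?supp d) = d" .
  qed
  moreover have "?vec ` (Pow {..<g} - {{}}) \<subseteq> ?D"
  proof (rule image_subsetI)
    fix S assume "S \<in> Pow {..<g} - {{}}"
    then have "S \<subseteq> {..<g}" and "card S \<noteq> 0"
      using finite_subset by fastforce+
    then have "p dvd (\<Prod>i<g. ?vec S i)"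
      using prod_indicator_power[of S g p] by simp
    then show "?vec S \<in> ?D"
      by simp
  qed
  moreover have "?supp d \<noteq> {}" if "d \<in> ?D" for d
  proof
    assume "?supp d = {}"
    then have "\<forall>i \<in> {..<g}. d i = 1"
      using that dvd_prime_nat_iff[OF assms] by (force simp: PiE_iff)
    then have "(\<Prod>i<g. d i) = 1"
      by (rule prod.neutral)
    then show False
      using that \<open>p \<noteq> 1\<close> by simp
  qed
  then have "?supp ` ?D \<subseteq> Pow {..<g} - {{}}"
    by auto
  ultimately show ?thesis
    by (rule bij_betw_byWitness)
qed

lemma omega_eq_sum_nonempty_subsets:
  assumes "prime p"
  shows "omega g a b c p = real p * (\<Sum>S \<in> Pow {..<g} - {{}}.
    (-1) ^ (card S + 1) * real (rho g a b c (\<lambda>i. if i \<in> S then p else 1))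
      / real p ^ (2 * card S))"
proof -
  let ?vec = "\<lambda>S. restrict (\<lambda>i. if i \<in> S then p else 1) {..<g}"
  have "of_int (moebius p * (\<Prod>i<g. moebius (?vec S i))) * real (rho g a b c (?vec S))
      / (real (\<Prod>i<g. ?vec S i))^2 =
    (-1) ^ (card S + 1) * real (rho g a b c (\<lambda>i. if i \<in> S then p else 1))
      / real p ^ (2 * card S)"
    if "S \<subseteq> {..<g}" for S
  proof -
    have "(\<Prod>i<g. moebius (?vec S i)) = (\<Prod>i<g. if i \<in> S then -1 else 1)"
      using moebius_prime[OF assms] moebius_1 by (intro prod.cong) auto
    also have "\<dots> = (-1) ^ card S"
      by (rule prod_indicator_power[OF that])
    finally have "(\<Prod>i<g. moebius (?vec S i)) = (-1) ^ card S" .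
    moreover have "(\<Prod>i<g. ?vec S i) = p ^ card S"
      using prod_indicator_power[OF that, of p] by simp
    moreover have "rho g a b c (?vec S) = rho g a b c (\<lambda>i. if i \<in> S then p else 1)"
      by (rule rho_cong) simp
    ultimately show ?thesis
      using moebius_prime[OF assms] by (simp add: power_even_eq)
  qed
  then show ?thesis
    unfolding omega_def
    by (simp add: sum.reindex_bij_betw[OF bij_betw_nonempty_subsets_prime_divisor_vectors[OF assms],
          symmetric])
qed

lemma sum_nonempty_subsets_alternating:
  assumes "finite A" and "A \<noteq> {}"
  shows "(\<Sum>S \<in> Pow A - {{}}. (-1) ^ (card S + 1)) = (1::'a::comm_ring_1)"
proof -
  have "(\<Sum>S \<in> Pow A. (-1) ^ card S) = (0::'a) ^ card A"
    using prod_diff_conv_sum[OF assms(1), of "\<lambda>_. 1::'a" "\<lambda>_. 1"] by simp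
  also have "\<dots> = 0"
    using assms by (simp add: power_0_left card_eq_0_iff)
  also have "(\<Sum>S \<in> Pow A. (-1) ^ card S) = 1 + (\<Sum>S \<in> Pow A - {{}}. (-1::'a) ^ card S)"
    using assms(1) by (simp add: sum.remove[of _ "{}"])
  finally show ?thesis
    by (simp add: sum_negf add_eq_0_iff)
qed

lemma sum_singleton_subsets:
  fixes f :: "'a set \<Rightarrow> 'b::comm_monoid_add"
  assumes "finite A"
  shows "(\<Sum>S \<in> Pow A - {{}}. if card S = 1 then f S else 0) = (\<Sum>x\<in>A. f {x})"
proof -
  have "(\<Sum>S \<in> Pow A - {{}}. if card S = 1 then f S else 0)
      = (\<Sum>S \<in> {S \<in> Pow A - {{}}. card S = 1}. f S)"
    using assms by (intro sum.inter_filter[symmetric]) simp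
  also have "{S \<in> Pow A - {{}}. card S = 1} = (\<lambda>x. {x}) ` A"
    by (auto simp: card_1_singleton_iff)
  also have "sum f ((\<lambda>x. {x}) ` A) = (\<Sum>x\<in>A. f {x})"
    by (simp add: sum.reindex)
  finally show ?thesis .
qed

theorem lemma3p3:
  fixes g :: nat and a b c :: "nat \<Rightarrow> int" and p :: nat
  assumes "g \<ge> 2"
    and "\<forall>i<g. irreducible [:c i, 2 * b i, a i:]"
    and "\<forall>i<g. a i mod 4 = 1"
    and "bigD g a b c \<noteq> 0"
    and "prime p"
    and "\<not> int p dvd bigD g a b c"
  shows "omega g a b c p =
           (1 / real p) * ((\<Sum>j<g. real (rho g a b c (\<lambda>i. if i = j then p else 1)))
                           + 1 - real g)"
proof -
  let ?T = "Pow {..<g} - {{}}"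
  let ?r = "\<lambda>S. real (rho g a b c (\<lambda>i. if i \<in> S then p else 1))"
  have coprime_res: "\<not> int p dvd qres (a i) (b i) (c i) (a j) (b j) (c j)"
    if "i < j" "j < g" for i j
    using assms(6) qres_dvd_bigD[OF that] dvd_trans by blast
  have "omega g a b c p = real p *
      (\<Sum>S\<in>?T. ((-1) ^ (card S + 1) + (if card S = 1 then ?r S - 1 else 0)) / real p ^ 2)"
    unfolding omega_eq_sum_nonempty_subsets[OF \<open>prime p\<close>]
    by (intro arg_cong[where f = "(*) (real p)"] sum.cong refl omega_summand_eq[OF \<open>prime p\<close>])
      (use coprime_res in blast)+
  also have "\<dots> = real p * (1 + (\<Sum>j<g. ?r {j} - 1)) / real p ^ 2"
  proof -
    have "(\<Sum>S\<in>?T. (-1::real) ^ (card S + 1)) = 1"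
      using \<open>g \<ge> 2\<close> by (intro sum_nonempty_subsets_alternating) (auto simp: lessThan_empty_iff)
    moreover have "(\<Sum>S\<in>?T. if card S = 1 then ?r S - 1 else 0) = (\<Sum>j<g. ?r {j} - 1)"
      by (rule sum_singleton_subsets) simp
    ultimately show ?thesis
      unfolding sum_divide_distrib[symmetric] sum.distrib by simp
  qed
  also have "\<dots> = (1 / real p) * ((\<Sum>j<g. ?r {j}) + 1 - real g)"
    using prime_gt_0_nat[OF \<open>prime p\<close>] by (simp add: sum_subtractf power2_eq_square)
  finally show ?thesis
    by simp
qed

end
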